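(* There is a number $c$ with $0<c<\min\{k_0/4,\ k_1|E_0|/2,\ k_2|\pi_0|^2/2\}$ such that $V^{-1}([0,c])$ is a compact subset of $U$ and the set of all critical points of $V$ in $V^{-1}([0,c])$ equals $V^{-1}(0)=\{(R,\Omega): R\in SO(3),\ E(\Omega)=E_0,\ \pi(R,\Omega)=\pi_0\}$.
   Context: $\mathbb I$ is a symmetric positive definite $3\times3$ matrix. $\mathbb R^{3\times3}\times\mathbb R^3$ carries the standard inner product ($\operatorname{trace}(A^TB)$ on matrices), $\|A\|=\sqrt{\operatorname{trace}(A^TA)}$, and gradients are taken with respect to it. Define $E(\Omega)=\tfrac12\Omega^T\mathbb I\Omega$ and $\pi(R,\Omega)=R\mathbb I\Omega$. Fix $R_0\in SO(3)$, $\Omega_0\in\mathbb R^3\setminus\{0\}$, $E_0=E(\Omega_0)$, $\pi_0=\pi(R_0,\Omega_0)$. Let $U=\{(R,\Omega)\in\mathbb R^{3\times3}\times\mathbb R^3:\det R>0\}$ and, with constants $k_0,k_1,k_2>0$, $$V(R,\Omega)=\tfrac{k_0}{4}\|R^TR-I\|^2+\tfrac{k_1}{2}|E(\Omega)-E_0|^2+\tfrac{k_2}{2}|\pi(R,\Omega)-\pi_0|^2$$ on $U$. *)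

theory Defs
  imports "HOL-Analysis.Analysis"
begin

text \<open>Matrices are real^3^3 (inner product = trace(A^T B), norm = Frobenius norm);
  the state space is real^3^3 \<times> real^3 with the product inner product.\<close>

definition SO3 :: "(real^3^3) set" where
  "SO3 = {R. orthogonal_matrix R \<and> det R = 1}"

definition energy :: "real^3^3 \<Rightarrow> real^3 \<Rightarrow> real" where
  "energy II \<Omega> = (1/2) * (\<Omega> \<bullet> (II *v \<Omega>))"

definition momentum :: "real^3^3 \<Rightarrow> real^3^3 \<Rightarrow> real^3 \<Rightarrow> real^3" where
  "momentum II R \<Omega> = R *v (II *v \<Omega>)"

definition Udom :: "((real^3^3) \<times> (real^3)) set" where
  "Udom = {(R, \<Omega>). det R > 0}"

definition Vfun :: "real^3^3 \<Rightarrow> real \<Rightarrow> real \<Rightarrow> real \<Rightarrow> real \<Rightarrow> real^3 \<Rightarrow>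
    (real^3^3) \<times> (real^3) \<Rightarrow> real" where
  "Vfun II k0 k1 k2 E0 \<pi>0 = (\<lambda>(R, \<Omega>).
      k0/4 * (norm (transpose R ** R - mat 1))^2
    + k1/2 * \<bar>energy II \<Omega> - E0\<bar>^2
    + k2/2 * (norm (momentum II R \<Omega> - \<pi>0))^2)"

end

theory Submission
  imports Defs
begin

text \<open>
  Write A = R^T R - I, d = E(\<Omega>) - E0, e = \<pi>(R,\<Omega>) - \<pi>0 and w = II \<Omega>. At a critical point
  of V the \<Omega>-derivative gives k1 d \<Omega> + k2 R^T e = 0 and the R-derivative gives
  k0 R A + k2 e w^T = 0. If d = 0 these force e = 0 and A = 0, i.e. V = 0. If d \<noteq> 0,
  eliminating e gives k0 (A^2 + A) = k1 d \<Omega> w^T; symmetry of the left side makes \<Omega> an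
  eigenvector of II (eigenvalue l) and then of A (eigenvalue a), and one finds
  |\<pi>0|^2 - 2 l E0 = N ((l + \<sigma>)^2 (1 + a) - l^2) + 2 l d with N = |\<Omega>|^2 and
  \<sigma> = k1 d / (k2 (1 + a)), a number that has the sign of d and is O(|A| + |d|). Since II has
  finitely many eigenvalues, the nonzero values of |\<pi>0|^2 - 2 l E0 are bounded away from 0, so
  on a small enough sublevel set the case d \<noteq> 0 cannot occur. Compactness: V \<le> c < k0/4
  gives |A| < 1, so det R stays away from 0 and R is bounded, and positive definiteness of II
  bounds \<Omega>.
\<close>

lemma bounded_bilinear_matrix_matrix_mult:
  "bounded_bilinear (\<lambda>(A::real^'n^'m) (B::real^'p^'n). A ** B)"
proof -
  have "bilinear (\<lambda>(A::real^'n^'m) (B::real^'p^'n). A ** B)"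
    unfolding bilinear_def
    by (auto intro!: linearI simp: vec_eq_iff matrix_matrix_mult_def sum.distrib sum_distrib_left algebra_simps)
  then show ?thesis by (simp add: bilinear_conv_bounded_bilinear)
qed

lemma bounded_bilinear_matrix_vector_mult:
  "bounded_bilinear (\<lambda>(A::real^'n^'m) (x::real^'n). A *v x)"
proof -
  have "bilinear (\<lambda>(A::real^'n^'m) (x::real^'n). A *v x)"
    unfolding bilinear_def
    by (auto intro!: linearI simp: vec_eq_iff matrix_vector_mult_def sum.distrib sum_distrib_left algebra_simps)
  then show ?thesis by (simp add: bilinear_conv_bounded_bilinear)
qed

lemma bounded_linear_transpose: "bounded_linear (transpose :: real^'n^'m \<Rightarrow> real^'m^'n)"
proof -
  have "linear (transpose :: real^'n^'m \<Rightarrow> real^'m^'n)"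
    by (auto intro!: linearI simp: transpose_def vec_eq_iff)
  then show ?thesis by (simp add: linear_conv_bounded_linear)
qed

lemma transpose_diff: "transpose (A - B) = transpose A - (transpose B :: real^'n^'m)"
  by (simp add: transpose_def vec_eq_iff)

declare transpose_matrix_vector [simp del]

lemma inner_transpose: "inner (A::real^'n^'m) (transpose B) = inner (transpose A) B"
  unfolding inner_vec_def transpose_def
  by (simp add: sum.swap[of _ "UNIV::'n set"] mult.commute)

lemma inner_matrix_vector_mult: "inner (x::real^'m) ((A::real^'n^'m) *v y) = inner (transpose A *v x) y"
  by (simp add: dot_lmul_matrix transpose_matrix_vector)

lemma inner_symmetric_matrix_vector_mult:
  "transpose (M::real^'n^'n) = M \<Longrightarrow> inner x (M *v y) = inner (M *v x) y"
  using inner_matrix_vector_mult[of x M y] by simp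

lemma inner_matrix_matrix_mult:
  "inner (A::real^'n^'m) ((B::real^'k^'m) ** C) = inner (transpose B ** A) C"
  unfolding inner_vec_def transpose_def matrix_matrix_mult_def
  apply (simp add: sum_distrib_left sum_distrib_right mult_ac)
  apply (rule trans[OF sum.cong[OF refl sum.swap]])
  apply (rule trans[OF sum.swap])
  apply (rule sum.cong[OF refl sum.swap])
  done

definition outer :: "real^'m \<Rightarrow> real^'n \<Rightarrow> real^'n^'m" where
  "outer u v = (\<chi> i j. u$i * v$j)"

lemma inner_outer: "inner (u::real^'m) ((H::real^'n^'m) *v v) = inner (outer u v) H"
  unfolding inner_vec_def outer_def matrix_vector_mult_def
  by (simp add: sum_distrib_left sum_distrib_right algebra_simps)

lemma outer_matrix_vector_mult: "outer u v *v x = inner v x *\<^sub>R (u::real^'m)"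
  unfolding inner_vec_def outer_def matrix_vector_mult_def
  by (simp add: vec_eq_iff sum_distrib_left sum_distrib_right algebra_simps)

lemma norm_matrix_vector_mult_le: "norm ((A::real^'n^'m) *v x) \<le> norm A * norm x"
proof -
  have norm_sq: "(norm y)^2 = (\<Sum>i\<in>UNIV. (norm (y$i))^2)" for y :: "real^'k^'l"
    unfolding norm_vec_def L2_set_def by (simp add: sum_nonneg)
  have "(norm (A *v x))^2 = (\<Sum>i\<in>UNIV. (inner (A$i) x)^2)"
    unfolding norm_vec_def L2_set_def by (simp add: sum_nonneg matrix_vector_mul_component)
  also have "\<dots> \<le> (\<Sum>i\<in>UNIV. (norm (A$i))^2 * (norm x)^2)"
  proof (rule sum_mono)
    fix i
    have "\<bar>inner (A$i) x\<bar>^2 \<le> (norm (A$i) * norm x)^2"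
      by (rule power_mono[OF Cauchy_Schwarz_ineq2]) simp
    then show "(inner (A$i) x)^2 \<le> (norm (A$i))^2 * (norm x)^2" by (simp add: power_mult_distrib)
  qed
  also have "\<dots> = (norm A * norm x)^2"
    by (simp add: norm_sq power_mult_distrib sum_distrib_right)
  finally show ?thesis by (rule power2_le_imp_le) simp
qed

lemma det_eq_0_iff_kernel: "det (M::real^'n^'n) = 0 \<longleftrightarrow> (\<exists>x. x \<noteq> 0 \<and> M *v x = 0)"
  using invertible_det_nz[of M] invertible_left_inverse[of M] matrix_left_invertible_ker[of M] by blast

definition orth_defect :: "real^'n^'n \<Rightarrow> real^'n^'n" where
  "orth_defect R = transpose R ** R - mat 1"

lemma transpose_orth_defect [simp]: "transpose (orth_defect R) = orth_defect R"
  by (simp add: orth_defect_def matrix_transpose_mul transpose_diff)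

lemma transpose_mult_self_matrix_vector:
  "transpose R *v (R *v y) = orth_defect R *v y + (y::real^'n)"
  by (simp add: orth_defect_def matrix_vector_mul_assoc matrix_vector_mult_diff_rdistrib)

lemma norm_matrix_vector_mult_sq:
  "(norm (R *v y))^2 = (norm y)^2 + inner y (orth_defect R *v (y::real^'n))"
proof -
  have "(norm (R *v y))^2 = inner (transpose R *v (R *v y)) y"
    by (metis dot_square_norm inner_matrix_vector_mult)
  then show ?thesis
    by (simp add: transpose_mult_self_matrix_vector inner_add_right inner_commute dot_square_norm)
qed

lemma det_nonzero_if_norm_orth_defect_less_1:
  assumes "norm (orth_defect (R::real^'n^'n)) < 1"
  shows "det R \<noteq> 0"
proof
  assume "det R = 0"
  then obtain x where x: "x \<noteq> 0" "R *v x = 0" using det_eq_0_iff_kernel by blast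
  then have "orth_defect R *v x = - x"
    using transpose_mult_self_matrix_vector[of R x] by (simp add: eq_neg_iff_add_eq_0)
  then have "norm x \<le> norm (orth_defect R) * norm x"
    using norm_matrix_vector_mult_le[of "orth_defect R" x] by simp
  then show False using x assms by (simp add: mult_le_cancel_right1)
qed

lemma norm_sq_le_orth_defect:
  "(norm (R::real^'n^'n))^2 \<le> norm (orth_defect R) * norm (mat 1 :: real^'n^'n) + (norm (mat 1 :: real^'n^'n))^2"
proof -
  have "(norm R)^2 = inner (transpose R ** R) (mat 1)"
    using inner_matrix_matrix_mult[of R R "mat 1"] by (simp add: dot_square_norm)
  also have "\<dots> = inner (orth_defect R) (mat 1) + inner (mat 1) (mat 1 :: real^'n^'n)"
    by (simp add: orth_defect_def inner_diff_left)
  also have "\<dots> \<le> norm (orth_defect R) * norm (mat 1 :: real^'n^'n) + (norm (mat 1 :: real^'n^'n))^2"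
    using norm_cauchy_schwarz[of "orth_defect R" "mat 1"] by (simp add: dot_square_norm)
  finally show ?thesis .
qed

lemma SO3_iff: "R \<in> SO3 \<longleftrightarrow> det R > 0 \<and> orth_defect R = 0"
proof
  assume "det R > 0 \<and> orth_defect R = 0"
  moreover then have "orthogonal_matrix R" by (simp add: orthogonal_matrix orth_defect_def)
  ultimately show "R \<in> SO3" using det_orthogonal_matrix[of R] by (auto simp: SO3_def)
qed (simp add: SO3_def orthogonal_matrix orth_defect_def)

lemma positive_definite_coercive:
  fixes M :: "real^'n^'n"
  assumes pd: "\<And>x. x \<noteq> 0 \<Longrightarrow> x \<bullet> (M *v x) > 0"
  obtains m where "m > 0" "\<And>x. m * (norm x)^2 \<le> x \<bullet> (M *v x)"
proof -
  let ?q = "\<lambda>x::real^'n. x \<bullet> (M *v x)"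
  have "continuous_on (sphere 0 1) ?q"
    by (intro continuous_on_inner continuous_on_id linear_continuous_on)
      (simp add: linear_conv_bounded_linear[symmetric])
  moreover have "sphere (0::real^'n) 1 \<noteq> {}" by simp
  ultimately obtain x0 where x0: "x0 \<in> sphere 0 1" and min: "\<And>y. y \<in> sphere 0 1 \<Longrightarrow> ?q x0 \<le> ?q y"
    using continuous_attains_inf[OF compact_sphere] by blast
  have "?q x0 * (norm x)^2 \<le> ?q x" for x
  proof (cases "x = 0")
    case False
    have "?q x0 \<le> ?q ((1 / norm x) *\<^sub>R x)" using False by (intro min) simp
    also have "\<dots> = ?q x / (norm x)^2"
      by (simp add: matrix_vector_mult_scaleR power2_eq_square)
    finally show ?thesis using False by (simp add: field_simps)
  qed simp
  moreover have "?q x0 > 0" using x0 by (intro pd) auto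
  ultimately show ?thesis using that by blast
qed

definition eigenvalues :: "real^'n^'n \<Rightarrow> real set" where
  "eigenvalues M = {l. \<exists>x. x \<noteq> 0 \<and> M *v x = l *\<^sub>R x}"

lemma abs_eigenvalue_le_norm:
  assumes "l \<in> eigenvalues M" shows "\<bar>l\<bar> \<le> norm M"
proof -
  obtain x where x: "x \<noteq> 0" "M *v x = l *\<^sub>R x" using assms by (auto simp: eigenvalues_def)
  then have "\<bar>l\<bar> * norm x \<le> norm M * norm x" using norm_matrix_vector_mult_le[of M x] by simp
  then show ?thesis using x by simp
qed

lemma coercivity_le_eigenvalue:
  assumes "l \<in> eigenvalues M" and "\<And>x. m * (norm x)^2 \<le> x \<bullet> (M *v x)"
  shows "m \<le> l"
proof -
  obtain x where x: "x \<noteq> 0" "M *v x = l *\<^sub>R x" using assms(1) by (auto simp: eigenvalues_def)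
  then have "m * (norm x)^2 \<le> l * (norm x)^2" using assms(2)[of x] by (simp add: dot_square_norm)
  then show ?thesis using x by simp
qed

lemma finite_eigenvalues_symmetric:
  assumes sym: "transpose (M::real^'n^'n) = M"
  shows "finite (eigenvalues M)"
proof -
  define v where "v l = (SOME x. x \<noteq> 0 \<and> M *v x = l *\<^sub>R x)" for l
  have v: "v l \<noteq> 0 \<and> M *v v l = l *\<^sub>R v l" if "l \<in> eigenvalues M" for l
    using that unfolding v_def eigenvalues_def by (metis (mono_tags, lifting) mem_Collect_eq someI)
  have inj: "inj_on v (eigenvalues M)"
  proof (rule inj_onI)
    fix a b assume a: "a \<in> eigenvalues M" and b: "b \<in> eigenvalues M" and "v a = v b"
    then have "a *\<^sub>R v a = b *\<^sub>R v a" using v by metis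
    then show "a = b" using v[OF a] by simp
  qed
  have "pairwise orthogonal (v ` eigenvalues M)"
  proof (clarsimp simp: pairwise_def)
    fix a b assume a: "a \<in> eigenvalues M" and b: "b \<in> eigenvalues M" and "v a \<noteq> v b"
    then have "a \<noteq> b" by auto
    have "a * inner (v a) (v b) = inner (v a) (M *v v b)"
      using v[OF a] inner_symmetric_matrix_vector_mult[OF sym] by simp
    also have "\<dots> = b * inner (v a) (v b)" using v[OF b] by simp
    finally show "orthogonal (v a) (v b)" using \<open>a \<noteq> b\<close> by (simp add: orthogonal_def)
  qed
  moreover have "0 \<notin> v ` eigenvalues M" using v by auto
  ultimately have "finite (v ` eigenvalues M)"
    using pairwise_orthogonal_independent finiteI_independent by blast
  then show ?thesis using finite_imageD[OF _ inj] by blast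
qed

lemma finite_nonzero_values_bounded_away:
  assumes "finite L"
  obtains \<eta> :: real where "\<eta> > 0" "\<And>l. l \<in> L \<Longrightarrow> f l \<noteq> 0 \<Longrightarrow> \<eta> \<le> \<bar>f l\<bar>"
proof
  let ?G = "insert 1 ((\<lambda>l. \<bar>f l\<bar>) ` {l \<in> L. f l \<noteq> 0})"
  show "Min ?G > 0" using assms by (simp add: Min_gr_iff)
  show "Min ?G \<le> \<bar>f l\<bar>" if "l \<in> L" "f l \<noteq> 0" for l
    using assms that by (intro Min_le) auto
qed

lemma parallel_if_symmetric_rank_one:
  fixes u w :: "real^'n"
  assumes sym: "\<And>x y. inner y (B x) = inner (B y) x"
    and rank_one: "\<And>x. B x = inner w x *\<^sub>R u" and "u \<noteq> 0"
  shows "w = (inner w u / inner u u) *\<^sub>R u"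
proof -
  have uu: "inner u u > 0" using \<open>u \<noteq> 0\<close> by simp
  have "inner (w - (inner w u / inner u u) *\<^sub>R u) x = 0" for x
  proof -
    have "inner w x * inner u u = inner w u * inner u x"
      using sym[of x u] by (simp add: rank_one inner_commute mult.commute)
    then show ?thesis using uu by (simp add: inner_diff_left field_simps)
  qed
  then have "inner (w - (inner w u / inner u u) *\<^sub>R u) (w - (inner w u / inner u u) *\<^sub>R u) = 0" by blast
  then show ?thesis by simp
qed

text \<open>Q = A^2 + A is symmetric and of rank one, so w is parallel to u; as A commutes with Q,
  u is also an eigenvector of A.\<close>

lemma eigen_relations_of_rank_one_identity:
  fixes A :: "real^'n^'n" and u w :: "real^'n"
  assumes symA: "transpose A = A"
    and rel: "\<And>x. k *\<^sub>R (A *v (A *v x) + A *v x) = (c * inner w x) *\<^sub>R u"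
    and k: "k \<noteq> 0" and c: "c \<noteq> 0" and u: "u \<noteq> 0" and wu: "inner w u \<noteq> 0"
  obtains l a where "w = l *\<^sub>R u" "A *v u = a *\<^sub>R u" "a * (1 + a) * k = c * l * (norm u)^2"
proof -
  define Q where "Q x = A *v (A *v x) + A *v x" for x
  have symQ: "inner y (Q x) = inner (Q y) x" for x y
    unfolding Q_def using inner_symmetric_matrix_vector_mult[OF symA]
    by (simp add: inner_add_left inner_add_right)
  have Q: "Q x = (c / k * inner w x) *\<^sub>R u" for x
    using arg_cong[OF rel[of x], of "scaleR (1 / k)"] k unfolding Q_def by simp
  define l where "l = inner w u / inner u u"
  have wl: "w = l *\<^sub>R u"
    unfolding l_def using u symQ by (intro parallel_if_symmetric_rank_one[of "\<lambda>x. (k / c) *\<^sub>R Q x"])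
      (auto simp: Q inner_commute k c)
  have uu: "inner u u > 0" using u by simp
  define \<mu> where "\<mu> = c * l / k"
  have Qu: "Q x = (\<mu> * inner u x) *\<^sub>R u" for x
    unfolding Q wl \<mu>_def by simp
  have "\<mu> \<noteq> 0" using c k wu unfolding \<mu>_def wl by auto
  moreover have "Q (A *v u) = A *v Q u"
    unfolding Q_def by (simp add: matrix_vector_right_distrib)
  ultimately have eq: "inner u (A *v u) *\<^sub>R u = inner u u *\<^sub>R (A *v u)"
    unfolding Qu by (metis matrix_vector_mult_scaleR scaleR_cancel_left scaleR_scaleR)
  define a where "a = inner u (A *v u) / inner u u"
  have "A *v u = (1 / inner u u) *\<^sub>R (inner u u *\<^sub>R (A *v u))" using uu by simp
  also have "\<dots> = a *\<^sub>R u" unfolding eq[symmetric] a_def by simp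
  finally have Au: "A *v u = a *\<^sub>R u" .
  have "(a * a + a) *\<^sub>R u = (\<mu> * inner u u) *\<^sub>R u"
    using Qu[of u] unfolding Q_def by (simp add: Au matrix_vector_mult_scaleR algebra_simps)
  then have "a * a + a = \<mu> * inner u u" using u by simp
  then have "a * (1 + a) * k = c * l * (norm u)^2"
    using k unfolding \<mu>_def by (simp add: dot_square_norm field_simps)
  with wl Au show ?thesis using that by blast
qed

lemma eq_scaled_image_if_transpose_mult_eq:
  fixes R :: "real^'n^'n"
  assumes Re: "transpose R *v e = (- s) *\<^sub>R u" and Au: "orth_defect R *v u = a *\<^sub>R u"
    and a: "1 + a \<noteq> 0" and detR: "det R \<noteq> 0"
  shows "e = (- (s / (1 + a))) *\<^sub>R (R *v u)"
proof -
  have "transpose R *v (e + (s / (1 + a)) *\<^sub>R (R *v u)) = (- s) *\<^sub>R u + (s / (1 + a)) *\<^sub>R ((1 + a) *\<^sub>R u)"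
    by (simp add: matrix_vector_right_distrib matrix_vector_mult_scaleR Re Au
        transpose_mult_self_matrix_vector scaleR_add_left add.commute)
  also have "\<dots> = 0" using a by simp
  finally show ?thesis
    using det_eq_0_iff_kernel[of "transpose R"] detR by (auto simp: det_transpose eq_neg_iff_add_eq_0)
qed

lemma residual_identity:
  fixes l a d N E0 \<sigma> :: real
  assumes "l * N = 2 * (E0 + d)"
  shows "(l + \<sigma>)^2 * (1 + a) * N - 2 * l * E0 = N * ((l + \<sigma>)^2 * (1 + a) - l^2) + 2 * l * d"
proof -
  have "2 * l * E0 = l * (l * N) - 2 * l * d" using assms by (simp add: algebra_simps)
  then show ?thesis by (simp add: algebra_simps power2_eq_square)
qed

lemma abs_mult_div_one_plus_le:
  fixes a d \<epsilon> \<kappa> :: real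
  assumes "\<bar>a\<bar> \<le> 1/2" "\<bar>d\<bar> \<le> \<epsilon>" "\<kappa> \<ge> 0"
  shows "\<bar>\<kappa> * d / (1 + a)\<bar> \<le> 2 * \<kappa> * \<epsilon>"
proof -
  have "\<bar>\<kappa> * d / (1 + a)\<bar> = \<kappa> * \<bar>d\<bar> / (1 + a)" using assms by (simp add: abs_mult)
  also have "\<dots> \<le> \<kappa> * \<epsilon> / (1/2)" using assms by (intro frac_le mult_left_mono) auto
  finally show ?thesis by simp
qed

text \<open>The relation a (1 + a) k0 = k1 d l N gives a, and hence \<sigma>, the sign of d; then so does the
  residual.\<close>

lemma residual_nonzero:
  fixes l a d N E0 k0 k1 \<kappa> :: real
  assumes l: "l > 0" and N: "N > 0" and k: "k0 > 0" "k1 > 0" "\<kappa> > 0"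
    and a: "\<bar>a\<bar> < 1" and d: "d \<noteq> 0"
    and rel: "a * (1 + a) * k0 = k1 * d * l * N" and lN: "l * N = 2 * (E0 + d)"
    and \<sigma>l: "\<bar>\<kappa> * d / (1 + a)\<bar> \<le> l"
  shows "(l + \<kappa> * d / (1 + a))^2 * (1 + a) * N \<noteq> 2 * l * E0"
proof -
  define \<sigma> where "\<sigma> = \<kappa> * d / (1 + a)"
  have a1: "1 + a > 0" using a by linarith
  have "sgn (a * (1 + a) * k0) = sgn d"
    unfolding rel using l N k by (simp add: sgn_mult)
  then have sgn_a: "sgn a = sgn d" using a1 k by (simp add: sgn_mult)
  have sgn_\<sigma>: "sgn \<sigma> = sgn d" unfolding \<sigma>_def using a1 k by (simp add: sgn_mult)
  have "N * ((l + \<sigma>)^2 * (1 + a) - l^2) + 2 * l * d \<noteq> 0"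
  proof (cases "d > 0")
    case True
    then have "a > 0" "\<sigma> > 0" using sgn_a sgn_\<sigma> by (auto simp: sgn_if split: if_splits)
    then have "l^2 * 1 < (l + \<sigma>)^2 * (1 + a)"
      using l by (intro mult_strict_mono power_strict_mono) auto
    then have "N * ((l + \<sigma>)^2 * (1 + a) - l^2) > 0" using N by simp
    moreover have "2 * l * d > 0" using l True by simp
    ultimately show ?thesis by linarith
  next
    case False
    then have "d < 0" using d by simp
    then have "a < 0" "\<sigma> < 0" using sgn_a sgn_\<sigma> by (auto simp: sgn_if split: if_splits)
    have "(l + \<sigma>)^2 < l^2"
      using l \<sigma>l \<open>\<sigma> < 0\<close> unfolding \<sigma>_def[symmetric] by (intro power_strict_mono) auto
    moreover have "(l + \<sigma>)^2 * (1 + a) \<le> (l + \<sigma>)^2" using \<open>a < 0\<close> by (simp add: mult_left_le)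
    ultimately have "N * ((l + \<sigma>)^2 * (1 + a) - l^2) < 0" using N by (simp add: mult_pos_neg)
    moreover have "2 * l * d < 0" using l \<open>d < 0\<close> by (simp add: mult_pos_neg)
    ultimately show ?thesis by linarith
  qed
  then show ?thesis using residual_identity[OF lN, of \<sigma> a] unfolding \<sigma>_def by simp
qed

lemma abs_residual_factor_le:
  fixes l a \<sigma> M \<kappa> \<epsilon> :: real
  assumes l: "0 < l" "l \<le> M" and a: "\<bar>a\<bar> \<le> \<epsilon>" "\<epsilon> \<le> 1/2" and \<kappa>: "0 \<le> \<kappa>"
    and \<sigma>: "\<bar>\<sigma>\<bar> \<le> 2 * \<kappa> * \<epsilon>" "\<bar>\<sigma>\<bar> \<le> l"
  shows "\<bar>(l + \<sigma>)^2 * (1 + a) - l^2\<bar> \<le> (M^2 + 9 * M * \<kappa>) * \<epsilon>"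
proof -
  have e0: "0 \<le> \<epsilon>" using a by linarith
  have "\<bar>2 * l * \<sigma> + \<sigma>^2\<bar> \<le> \<bar>2 * l * \<sigma>\<bar> + \<bar>\<sigma>^2\<bar>" by (rule abs_triangle_ineq)
  also have "\<dots> = 2 * l * \<bar>\<sigma>\<bar> + \<bar>\<sigma>\<bar> * \<bar>\<sigma>\<bar>" using l by (simp add: abs_mult power2_eq_square)
  also have "\<dots> \<le> 3 * l * \<bar>\<sigma>\<bar>" using mult_right_mono[OF \<sigma>(2) abs_ge_zero, of \<sigma>] by linarith
  also have "\<dots> \<le> 3 * M * (2 * \<kappa> * \<epsilon>)" using l \<sigma> by (intro mult_mono) auto
  finally have "\<bar>2 * l * \<sigma> + \<sigma>^2\<bar> \<le> 6 * M * \<kappa> * \<epsilon>" by simp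
  moreover have "0 \<le> 1 + a" "1 + a \<le> 3/2" using a by linarith+
  ultimately have "\<bar>(2 * l * \<sigma> + \<sigma>^2) * (1 + a)\<bar> \<le> (6 * M * \<kappa> * \<epsilon>) * (3/2)"
    using l \<kappa> e0 unfolding abs_mult by (intro mult_mono) auto
  moreover have "\<bar>l^2 * a\<bar> \<le> M^2 * \<epsilon>"
    using l a by (simp add: abs_mult) (intro mult_mono power_mono; auto)
  moreover have "(l + \<sigma>)^2 * (1 + a) - l^2 = l^2 * a + (2 * l * \<sigma> + \<sigma>^2) * (1 + a)"
    by (simp add: algebra_simps power2_eq_square)
  moreover have "(M^2 + 9 * M * \<kappa>) * \<epsilon> = M^2 * \<epsilon> + (6 * M * \<kappa> * \<epsilon>) * (3/2)"
    by (simp add: algebra_simps)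
  ultimately show ?thesis
    using abs_triangle_ineq[of "l^2 * a" "(2 * l * \<sigma> + \<sigma>^2) * (1 + a)"] by linarith
qed

lemma residual_bound:
  fixes l a d N E0 m M \<kappa> \<epsilon> :: real
  assumes m: "0 < m" "m \<le> l" "l \<le> M" and N: "N > 0" and \<kappa>: "\<kappa> > 0"
    and lN: "l * N = 2 * (E0 + d)" and a: "\<bar>a\<bar> \<le> \<epsilon>" and d: "\<bar>d\<bar> \<le> \<epsilon>"
    and \<epsilon>: "\<epsilon> \<le> 1/2" "\<epsilon> \<le> E0/2" "\<kappa> * \<epsilon> \<le> m/2"
  shows "\<bar>(l + \<kappa> * d / (1 + a))^2 * (1 + a) * N - 2 * l * E0\<bar>
    \<le> ((3 * E0 / m) * (M^2 + 9 * M * \<kappa>) + 2 * M) * \<epsilon>"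
proof -
  define \<sigma> where "\<sigma> = \<kappa> * d / (1 + a)"
  have l: "l > 0" using m by linarith
  have \<sigma>: "\<bar>\<sigma>\<bar> \<le> 2 * \<kappa> * \<epsilon>"
    unfolding \<sigma>_def using abs_mult_div_one_plus_le[of a d \<epsilon> \<kappa>] a d \<epsilon> \<kappa> by linarith
  then have "\<bar>\<sigma>\<bar> \<le> l" using \<epsilon> m by linarith
  then have bracket: "\<bar>(l + \<sigma>)^2 * (1 + a) - l^2\<bar> \<le> (M^2 + 9 * M * \<kappa>) * \<epsilon>"
    using abs_residual_factor_le[OF l m(3) a \<epsilon>(1) _ \<sigma>] \<kappa> by simp
  have "m * N \<le> l * N" using m N by simp
  also have "\<dots> \<le> 3 * E0" using lN abs_le_D1[OF d] \<epsilon>(2) by (simp add: algebra_simps)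
  finally have "N \<le> 3 * E0 / m" using m by (simp add: field_simps)
  then have "\<bar>N * ((l + \<sigma>)^2 * (1 + a) - l^2)\<bar> \<le> (3 * E0 / m) * ((M^2 + 9 * M * \<kappa>) * \<epsilon>)"
    unfolding abs_mult using N bracket by (intro mult_mono) auto
  moreover have "\<bar>2 * l * d\<bar> \<le> 2 * M * \<epsilon>"
    using l m d by (simp add: abs_mult) (intro mult_mono; auto)
  moreover have "((3 * E0 / m) * (M^2 + 9 * M * \<kappa>) + 2 * M) * \<epsilon>
      = (3 * E0 / m) * ((M^2 + 9 * M * \<kappa>) * \<epsilon>) + 2 * M * \<epsilon>"
    by (simp add: algebra_simps)
  ultimately show ?thesis
    unfolding \<sigma>_def[symmetric] residual_identity[OF lN]
    using abs_triangle_ineq[of "N * ((l + \<sigma>)^2 * (1 + a) - l^2)" "2 * l * d"] by linarith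
qed

locale rigid_body_lyapunov =
  fixes II :: "real^3^3" and k0 k1 k2 E0 :: real and \<pi>0 :: "real^3"
  assumes II_sym: "transpose II = II"
    and II_pd: "\<And>x. x \<noteq> 0 \<Longrightarrow> x \<bullet> (II *v x) > 0"
    and k0: "k0 > 0" and k1: "k1 > 0" and k2: "k2 > 0"
begin

abbreviation V :: "(real^3^3) \<times> (real^3) \<Rightarrow> real" where
  "V \<equiv> Vfun II k0 k1 k2 E0 \<pi>0"

lemma V_eq:
  "V (R, \<Omega>) = k0/4 * (norm (orth_defect R))^2 + k1/2 * (energy II \<Omega> - E0)^2
    + k2/2 * (norm (momentum II R \<Omega> - \<pi>0))^2"
  by (simp add: Vfun_def orth_defect_def power2_abs)

lemma V_terms_nonneg:
  "0 \<le> k0/4 * (norm (orth_defect R))^2 \<and> 0 \<le> k1/2 * (energy II \<Omega> - E0)^2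
    \<and> 0 \<le> k2/2 * (norm (momentum II R \<Omega> - \<pi>0))^2"
  using k0 k1 k2 by simp

lemma V_nonneg: "V p \<ge> 0"
  using V_terms_nonneg by (cases p) (smt (verit) V_eq)

lemma V_le_imp_terms_le:
  assumes "V (R, \<Omega>) \<le> c"
  shows "k0/4 * (norm (orth_defect R))^2 \<le> c" "k1/2 * (energy II \<Omega> - E0)^2 \<le> c"
  using assms V_terms_nonneg[of R \<Omega>] unfolding V_eq by linarith+

lemma V_eq_0_iff:
  "V (R, \<Omega>) = 0 \<longleftrightarrow> orth_defect R = 0 \<and> energy II \<Omega> = E0 \<and> momentum II R \<Omega> = \<pi>0"
proof -
  have "V (R, \<Omega>) = 0 \<longleftrightarrow> k0/4 * (norm (orth_defect R))^2 = 0 \<and> k1/2 * (energy II \<Omega> - E0)^2 = 0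
      \<and> k2/2 * (norm (momentum II R \<Omega> - \<pi>0))^2 = 0"
    using V_terms_nonneg[of R \<Omega>] unfolding V_eq by linarith
  also have "\<dots> \<longleftrightarrow> orth_defect R = 0 \<and> energy II \<Omega> = E0 \<and> momentum II R \<Omega> = \<pi>0"
    using k0 k1 k2 by simp
  finally show ?thesis .
qed

definition dV :: "real^3^3 \<Rightarrow> real^3 \<Rightarrow> (real^3^3) \<times> (real^3) \<Rightarrow> real" where
  "dV R \<Omega> = (\<lambda>(H, \<eta>). k0 * inner (orth_defect R) (transpose R ** H)
      + k1 * (energy II \<Omega> - E0) * inner \<eta> (II *v \<Omega>)
      + k2 * inner (momentum II R \<Omega> - \<pi>0) (H *v (II *v \<Omega>) + R *v (II *v \<eta>)))"

lemma has_derivative_V: "(V has_derivative dV R \<Omega>) (at (R, \<Omega>))"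
proof -
  have V_inner: "V = (\<lambda>p. k0/4 * inner (transpose (fst p) ** fst p - mat 1) (transpose (fst p) ** fst p - mat 1)
      + k1/2 * ((1/2) * inner (snd p) (II *v snd p) - E0) * ((1/2) * inner (snd p) (II *v snd p) - E0)
      + k2/2 * inner (fst p *v (II *v snd p) - \<pi>0) (fst p *v (II *v snd p) - \<pi>0))"
    unfolding Vfun_def energy_def momentum_def
    by (simp add: fun_eq_iff power2_abs dot_square_norm power2_eq_square)
  have D_sym: "inner (orth_defect R) (transpose H ** R) = inner (orth_defect R) (transpose R ** H)" for H
    using inner_transpose[of "orth_defect R" "transpose R ** H"] by (simp add: matrix_transpose_mul)
  have II_swap: "inner \<Omega> (II *v \<eta>) = inner (II *v \<Omega>) \<eta>" for \<eta>
    by (rule inner_symmetric_matrix_vector_mult[OF II_sym])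
  show ?thesis
    unfolding V_inner
    apply (rule has_derivative_eq_rhs)
     apply (rule derivative_eq_intros bounded_bilinear.FDERIV[OF bounded_bilinear_matrix_matrix_mult]
        bounded_bilinear.FDERIV[OF bounded_bilinear_matrix_vector_mult]
        bounded_linear.has_derivative[OF bounded_linear_transpose] refl)+
    apply (clarsimp simp add: fun_eq_iff dV_def)
    apply (simp only: inner_add_right inner_add_left D_sym II_swap energy_def momentum_def
        orth_defect_def[symmetric])
    apply (simp add: inner_commute field_simps)
    apply (metis D_sym inner_commute)
    done
qed

lemma continuous_V: "continuous_on UNIV V"
  by (rule continuous_at_imp_continuous_on)
    (auto intro: has_derivative_continuous[OF has_derivative_V])

lemma critical_point_equations:
  assumes "GDERIV V (R, \<Omega>) :> 0"
  shows "(k1 * (energy II \<Omega> - E0)) *\<^sub>R \<Omega> + k2 *\<^sub>R (transpose R *v (momentum II R \<Omega> - \<pi>0)) = 0"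
    and "k0 *\<^sub>R (R ** orth_defect R) + k2 *\<^sub>R outer (momentum II R \<Omega> - \<pi>0) (II *v \<Omega>) = 0"
proof -
  define e where "e = momentum II R \<Omega> - \<pi>0"
  define z where "z = (k1 * (energy II \<Omega> - E0)) *\<^sub>R \<Omega> + k2 *\<^sub>R (transpose R *v e)"
  define M where "M = k0 *\<^sub>R (R ** orth_defect R) + k2 *\<^sub>R outer e (II *v \<Omega>)"
  have "dV R \<Omega> = (\<lambda>h. inner h 0)"
    using has_derivative_unique[OF has_derivative_V] assms unfolding gderiv_def by blast
  then have dV0: "dV R \<Omega> (H, \<eta>) = 0" for H \<eta> by simp
  have "inner e (R *v (II *v \<eta>)) = inner (II *v (transpose R *v e)) \<eta>" for \<eta>
    by (simp only: inner_matrix_vector_mult[of e R] inner_symmetric_matrix_vector_mult[OF II_sym])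
  then have "inner (II *v z) \<eta> = dV R \<Omega> (0, \<eta>)" for \<eta>
    by (simp add: dV_def z_def e_def matrix_vector_right_distrib matrix_vector_mult_scaleR
        inner_add_left inner_add_right inner_commute)
  then have "inner (II *v z) (II *v z) = 0" using dV0 by simp
  then have "z = 0" using II_pd[of z] by (metis inner_eq_zero_iff inner_zero_right less_irrefl)
  then show "(k1 * (energy II \<Omega> - E0)) *\<^sub>R \<Omega> + k2 *\<^sub>R (transpose R *v (momentum II R \<Omega> - \<pi>0)) = 0"
    unfolding z_def e_def .
  have "inner M H = dV R \<Omega> (H, 0)" for H
    using inner_matrix_matrix_mult[of "orth_defect R" "transpose R" H] inner_outer[of e H "II *v \<Omega>"]
    by (simp add: dV_def M_def e_def inner_add_left)
  then have "inner M M = 0" using dV0 by simp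
  then show "k0 *\<^sub>R (R ** orth_defect R) + k2 *\<^sub>R outer (momentum II R \<Omega> - \<pi>0) (II *v \<Omega>) = 0"
    unfolding M_def e_def by simp
qed

lemma critical_point_on_energy_level:
  assumes crit: "GDERIV V (R, \<Omega>) :> 0" and det: "det R \<noteq> 0" and d: "energy II \<Omega> = E0"
  shows "V (R, \<Omega>) = 0"
proof -
  note eqs = critical_point_equations[OF crit]
  have "transpose R *v (momentum II R \<Omega> - \<pi>0) = 0" using eqs(1) d k2 by simp
  then have e: "momentum II R \<Omega> - \<pi>0 = 0"
    using det_eq_0_iff_kernel[of "transpose R"] det by (metis det_transpose)
  have "R *v (orth_defect R *v x) = 0" for x
    using arg_cong[OF eqs(2), of "\<lambda>M. M *v x"] e k0
    by (simp add: matrix_vector_mult_add_rdistrib outer_matrix_vector_mult matrix_vector_mul_assoc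
        flip: scaleR_matrix_vector_assoc)
  then have "orth_defect R = 0"
    using det_eq_0_iff_kernel[of R] det by (auto simp: matrix_eq)
  then show ?thesis using d e by (simp add: V_eq_0_iff)
qed

lemma critical_point_off_energy_level:
  assumes crit: "GDERIV V (R, \<Omega>) :> 0" and det: "det R \<noteq> 0" and d: "energy II \<Omega> \<noteq> E0"
    and A: "norm (orth_defect R) < 1" and \<Omega>: "\<Omega> \<noteq> 0"
  obtains l a where "l \<in> eigenvalues II" "II *v \<Omega> = l *\<^sub>R \<Omega>" "\<bar>a\<bar> \<le> norm (orth_defect R)"
    "a * (1 + a) * k0 = k1 * (energy II \<Omega> - E0) * l * (norm \<Omega>)^2"
    "\<pi>0 = (l + k1 / k2 * (energy II \<Omega> - E0) / (1 + a)) *\<^sub>R (R *v \<Omega>)"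
    "(norm (R *v \<Omega>))^2 = (1 + a) * (norm \<Omega>)^2"
proof -
  define s where "s = k1 / k2 * (energy II \<Omega> - E0)"
  define e where "e = momentum II R \<Omega> - \<pi>0"
  note eqs = critical_point_equations[OF crit, folded e_def]
  have Re: "transpose R *v e = (- s) *\<^sub>R \<Omega>"
    using arg_cong[OF eqs(1), of "scaleR (1 / k2)"] k2 unfolding s_def
    by (simp add: algebra_simps eq_neg_iff_add_eq_0)
  have "k0 *\<^sub>R (orth_defect R *v (orth_defect R *v x) + orth_defect R *v x)
      = (k1 * (energy II \<Omega> - E0) * inner (II *v \<Omega>) x) *\<^sub>R \<Omega>" for x
  proof -
    have "(k0 *\<^sub>R (R ** orth_defect R) + k2 *\<^sub>R outer e (II *v \<Omega>)) *v x
        = k0 *\<^sub>R (R *v (orth_defect R *v x)) + (k2 * inner (II *v \<Omega>) x) *\<^sub>R e"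
      by (simp add: matrix_vector_mult_add_rdistrib outer_matrix_vector_mult matrix_vector_mul_assoc
          flip: scaleR_matrix_vector_assoc)
    then have "k0 *\<^sub>R (transpose R *v (R *v (orth_defect R *v x)))
        + (k2 * inner (II *v \<Omega>) x) *\<^sub>R (transpose R *v e) = 0"
      using arg_cong[OF eqs(2), of "\<lambda>M. transpose R *v (M *v x)"]
      by (simp add: matrix_vector_right_distrib matrix_vector_mult_scaleR)
    then show ?thesis
      using k2 unfolding Re s_def transpose_mult_self_matrix_vector
      by (simp add: algebra_simps eq_neg_iff_add_eq_0)
  qed
  moreover have "inner (II *v \<Omega>) \<Omega> \<noteq> 0"
    using II_pd[OF \<Omega>] by (simp add: inner_commute)
  ultimately obtain l a where l: "II *v \<Omega> = l *\<^sub>R \<Omega>" and a: "orth_defect R *v \<Omega> = a *\<^sub>R \<Omega>"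
    and rel: "a * (1 + a) * k0 = k1 * (energy II \<Omega> - E0) * l * (norm \<Omega>)^2"
    using eigen_relations_of_rank_one_identity[OF transpose_orth_defect] k0 k1 d \<Omega>
    by (metis mult_eq_0_iff right_minus_eq less_irrefl)
  have eig_l: "l \<in> eigenvalues II" and eig_a: "a \<in> eigenvalues (orth_defect R)"
    using l a \<Omega> by (auto simp: eigenvalues_def)
  have a_le: "\<bar>a\<bar> \<le> norm (orth_defect R)" by (rule abs_eigenvalue_le_norm[OF eig_a])
  then have "1 + a \<noteq> 0" using A by linarith
  then have "e = (- (s / (1 + a))) *\<^sub>R (R *v \<Omega>)" by (rule eq_scaled_image_if_transpose_mult_eq[OF Re a _ det])
  then have "\<pi>0 = (l + s / (1 + a)) *\<^sub>R (R *v \<Omega>)"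
    unfolding e_def momentum_def l by (simp add: matrix_vector_mult_scaleR algebra_simps)
  moreover have "(norm (R *v \<Omega>))^2 = (1 + a) * (norm \<Omega>)^2"
    using norm_matrix_vector_mult_sq[of R \<Omega>] by (simp add: a dot_square_norm algebra_simps)
  ultimately show ?thesis using that eig_l l a_le rel unfolding s_def by blast
qed

lemma critical_point_residual:
  assumes crit: "GDERIV V (R, \<Omega>) :> 0" and det: "det R \<noteq> 0" and d: "energy II \<Omega> \<noteq> E0"
    and small: "norm (orth_defect R) \<le> \<epsilon>" "\<bar>energy II \<Omega> - E0\<bar> \<le> \<epsilon>"
    and \<epsilon>: "\<epsilon> \<le> 1/2" "\<epsilon> \<le> E0/2" "k1 / k2 * \<epsilon> \<le> m/2"
    and m: "m > 0" "\<And>x. m * (norm x)^2 \<le> x \<bullet> (II *v x)"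
  obtains l where "l \<in> eigenvalues II" "(norm \<pi>0)^2 \<noteq> 2 * l * E0"
    "\<bar>(norm \<pi>0)^2 - 2 * l * E0\<bar>
      \<le> ((3 * E0 / m) * ((norm II)^2 + 9 * norm II * (k1 / k2)) + 2 * norm II) * \<epsilon>"
proof -
  define \<delta> where "\<delta> = energy II \<Omega> - E0"
  have "0 < \<bar>\<delta>\<bar>" using d unfolding \<delta>_def by simp
  then have E0: "E0 > 0" using small(2) \<epsilon>(2) unfolding \<delta>_def[symmetric] by linarith
  have \<Omega>: "\<Omega> \<noteq> 0"
  proof
    assume "\<Omega> = 0"
    then have "\<bar>energy II \<Omega> - E0\<bar> = E0" using E0 by (simp add: energy_def)
    then show False using small(2) \<epsilon>(2) E0 by linarith
  qed
  have "norm (orth_defect R) < 1" using small(1) \<epsilon>(1) by linarith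
  then obtain l a where l: "l \<in> eigenvalues II" "II *v \<Omega> = l *\<^sub>R \<Omega>"
    and a: "\<bar>a\<bar> \<le> norm (orth_defect R)" and rel: "a * (1 + a) * k0 = k1 * \<delta> * l * (norm \<Omega>)^2"
    and \<pi>0: "\<pi>0 = (l + k1 / k2 * \<delta> / (1 + a)) *\<^sub>R (R *v \<Omega>)"
    and R\<Omega>: "(norm (R *v \<Omega>))^2 = (1 + a) * (norm \<Omega>)^2"
    using critical_point_off_energy_level[OF crit det d _ \<Omega>] unfolding \<delta>_def by blast
  define N where "N = (norm \<Omega>)^2"
  have N: "N > 0" using \<Omega> unfolding N_def by simp
  have lm: "m \<le> l" by (rule coercivity_le_eigenvalue[OF l(1) m(2)])
  have lM: "l \<le> norm II" using abs_eigenvalue_le_norm[OF l(1)] by linarith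
  have lN: "l * N = 2 * (E0 + \<delta>)"
    unfolding N_def \<delta>_def energy_def l(2) by (simp add: dot_square_norm)
  have nP: "(norm \<pi>0)^2 = (l + k1 / k2 * \<delta> / (1 + a))^2 * (1 + a) * N"
    unfolding \<pi>0 N_def by (simp add: R\<Omega> power_mult_distrib)
  have a\<epsilon>: "\<bar>a\<bar> \<le> \<epsilon>" and \<delta>\<epsilon>: "\<bar>\<delta>\<bar> \<le> \<epsilon>" using a small unfolding \<delta>_def by linarith+
  have "\<bar>k1 / k2 * \<delta> / (1 + a)\<bar> \<le> 2 * (k1 / k2 * \<epsilon>)"
    using abs_mult_div_one_plus_le[OF _ \<delta>\<epsilon>, of a "k1 / k2"] a\<epsilon> \<epsilon>(1) k1 k2 by simp
  then have "\<bar>k1 / k2 * \<delta> / (1 + a)\<bar> \<le> l" using \<epsilon>(3) lm by linarith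
  then have "(norm \<pi>0)^2 \<noteq> 2 * l * E0"
    unfolding nP using m lm k0 k1 k2 a\<epsilon> \<epsilon>(1) \<open>0 < \<bar>\<delta>\<bar>\<close>
    by (intro residual_nonzero[OF _ N k0 k1 _ _ _ rel[folded N_def] lN]) auto
  moreover have "\<bar>(norm \<pi>0)^2 - 2 * l * E0\<bar>
      \<le> ((3 * E0 / m) * ((norm II)^2 + 9 * norm II * (k1 / k2)) + 2 * norm II) * \<epsilon>"
    unfolding nP using k1 k2 by (intro residual_bound[OF m(1) lm lM N _ lN a\<epsilon> \<delta>\<epsilon> \<epsilon>]) auto
  ultimately show ?thesis using that l(1) by blast
qed

lemma small_critical_points_are_zeros:
  assumes E0: "E0 > 0"
  obtains \<epsilon> where "0 < \<epsilon>" "\<epsilon> \<le> 1/2" "\<epsilon> \<le> E0/2"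
    "\<And>R \<Omega>. GDERIV V (R, \<Omega>) :> 0 \<Longrightarrow> det R \<noteq> 0 \<Longrightarrow> norm (orth_defect R) \<le> \<epsilon>
      \<Longrightarrow> \<bar>energy II \<Omega> - E0\<bar> \<le> \<epsilon> \<Longrightarrow> V (R, \<Omega>) = 0"
proof -
  obtain m where m: "m > 0" "\<And>x. m * (norm x)^2 \<le> x \<bullet> (II *v x)"
    using positive_definite_coercive[OF II_pd] by blast
  obtain \<eta> where \<eta>: "\<eta> > 0"
    "\<And>l. l \<in> eigenvalues II \<Longrightarrow> (norm \<pi>0)^2 - 2 * l * E0 \<noteq> 0 \<Longrightarrow> \<eta> \<le> \<bar>(norm \<pi>0)^2 - 2 * l * E0\<bar>"
    using finite_nonzero_values_bounded_away[OF finite_eigenvalues_symmetric[OF II_sym],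
        of "\<lambda>l. (norm \<pi>0)^2 - 2 * l * E0"] by blast
  define K where "K = (3 * E0 / m) * ((norm II)^2 + 9 * norm II * (k1 / k2)) + 2 * norm II"
  have K: "K \<ge> 0" unfolding K_def using E0 m k1 k2 by simp
  define \<epsilon> where "\<epsilon> = min (min (1/2) (E0/2)) (min (m / (2 * (k1 / k2))) (\<eta> / (2 * (K + 1))))"
  have \<epsilon>_le: "\<epsilon> \<le> 1/2" "\<epsilon> \<le> E0/2" "\<epsilon> \<le> m / (2 * (k1 / k2))" "\<epsilon> \<le> \<eta> / (2 * (K + 1))"
    unfolding \<epsilon>_def by (meson min.cobounded1 min.cobounded2 order_trans)+
  have "0 < \<epsilon>" unfolding \<epsilon>_def using E0 m k1 k2 \<eta> K by simp
  moreover have "k1 / k2 * \<epsilon> \<le> m/2" using \<epsilon>_le(3) k1 k2 by (simp add: field_simps)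
  ultimately have \<epsilon>: "0 < \<epsilon>" "\<epsilon> \<le> 1/2" "\<epsilon> \<le> E0/2" "k1 / k2 * \<epsilon> \<le> m/2"
    using \<epsilon>_le by simp_all
  have "2 * (K * \<epsilon>) + 2 * \<epsilon> \<le> \<eta>"
    using \<epsilon>_le(4) K by (simp add: field_simps)
  then have K\<epsilon>: "K * \<epsilon> < \<eta>" using \<epsilon>(1) mult_nonneg_nonneg[OF K less_imp_le[OF \<epsilon>(1)]] by linarith
  show ?thesis
  proof (rule that[OF \<epsilon>(1-3)])
    fix R \<Omega>
    assume crit: "GDERIV V (R, \<Omega>) :> 0" and det: "det R \<noteq> 0"
      and small: "norm (orth_defect R) \<le> \<epsilon>" "\<bar>energy II \<Omega> - E0\<bar> \<le> \<epsilon>"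
    show "V (R, \<Omega>) = 0"
    proof (cases "energy II \<Omega> = E0")
      case True
      then show ?thesis by (rule critical_point_on_energy_level[OF crit det])
    next
      case False
      then obtain l where "l \<in> eigenvalues II" "(norm \<pi>0)^2 \<noteq> 2 * l * E0"
        "\<bar>(norm \<pi>0)^2 - 2 * l * E0\<bar> \<le> K * \<epsilon>"
        using critical_point_residual[OF crit det False small \<epsilon>(2-4) m] unfolding K_def by blast
      then show ?thesis using \<eta>(2) K\<epsilon> by force
    qed
  qed
qed

lemma det_nonzero_if_V_less:
  assumes "V (R, \<Omega>) < k0/4" shows "det R \<noteq> 0"
proof (rule det_nonzero_if_norm_orth_defect_less_1)
  have "k0/4 * (norm (orth_defect R))^2 < k0/4 * 1"
    using V_le_imp_terms_le(1)[OF order.refl, of R \<Omega>] assms by linarith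
  then have "(norm (orth_defect R))^2 < 1" using k0 by simp
  then show "norm (orth_defect R) < 1" using abs_square_less_1[of "norm (orth_defect R)"] by simp
qed

lemma bounded_sublevel: "bounded {p. V p \<le> c}"
proof -
  obtain m where m: "m > 0" "\<And>x. m * (norm x)^2 \<le> x \<bullet> (II *v x)"
    using positive_definite_coercive[OF II_pd] by blast
  define I where "I = norm (mat 1 :: real^3^3)"
  define BR where "BR = sqrt (sqrt (4 * c / k0) * I + I^2)"
  define B\<Omega> where "B\<Omega> = sqrt (2 * (E0 + sqrt (2 * c / k1)) / m)"
  have "norm p \<le> BR + B\<Omega>" if "V p \<le> c" for p
  proof -
    obtain R \<Omega> where p: "p = (R, \<Omega>)" by (cases p)
    note bounds = V_le_imp_terms_le[OF that[unfolded p]]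
    have "norm (orth_defect R) \<le> sqrt (4 * c / k0)"
      using bounds(1) k0 by (intro real_le_rsqrt) (simp add: field_simps)
    then have "(norm R)^2 \<le> sqrt (4 * c / k0) * I + I^2"
      using norm_sq_le_orth_defect[of R] unfolding I_def by (smt (verit) mult_right_mono norm_ge_zero)
    then have R: "norm R \<le> BR" unfolding BR_def by (rule real_le_rsqrt)
    have "energy II \<Omega> - E0 \<le> sqrt (2 * c / k1)"
      using bounds(2) k1 by (intro real_le_rsqrt) (simp add: field_simps)
    then have "m * (norm \<Omega>)^2 \<le> 2 * (E0 + sqrt (2 * c / k1))"
      using m(2)[of \<Omega>] unfolding energy_def by (simp add: algebra_simps)
    then have \<Omega>: "norm \<Omega> \<le> B\<Omega>" unfolding B\<Omega>_def using m(1) by (intro real_le_rsqrt) (simp add: field_simps)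
    show ?thesis using norm_Pair_le[of R \<Omega>] R \<Omega> unfolding p by linarith
  qed
  then show ?thesis unfolding bounded_iff by blast
qed

lemma compact_sublevel:
  assumes "c < k0/4"
  shows "compact {p \<in> Udom. V p \<in> {0..c}}"
proof -
  have "{p \<in> Udom. V p \<in> {0..c}} = {p. 0 \<le> det (fst p)} \<inter> {p. V p \<le> c}"
  proof (intro set_eqI iffI)
    fix p :: "(real^3^3) \<times> (real^3)"
    assume p: "p \<in> {p. 0 \<le> det (fst p)} \<inter> {p. V p \<le> c}"
    then have "det (fst p) \<noteq> 0" using det_nonzero_if_V_less[of "fst p" "snd p"] assms by simp
    then show "p \<in> {p \<in> Udom. V p \<in> {0..c}}" using p V_nonneg[of p] by (simp add: Udom_def case_prod_beta)
  qed (simp add: Udom_def case_prod_beta)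
  moreover have "continuous_on UNIV (\<lambda>p::(real^3^3) \<times> (real^3). det (fst p))"
    unfolding det_def by (intro continuous_intros)
  then have "closed ({p. 0 \<le> det (fst p)} \<inter> {p. V p \<le> c})"
    by (intro closed_Int closed_Collect_le continuous_on_const continuous_V)
  moreover have "bounded ({p. 0 \<le> det (fst p)} \<inter> {p. V p \<le> c})"
    using bounded_sublevel by (rule bounded_subset) blast
  ultimately show ?thesis by (simp add: compact_eq_bounded_closed)
qed

lemma zero_set_eq:
  "{p \<in> Udom. V p = 0} = {(R, \<Omega>). R \<in> SO3 \<and> energy II \<Omega> = E0 \<and> momentum II R \<Omega> = \<pi>0}"
proof (rule set_eqI)
  fix p :: "(real^3^3) \<times> (real^3)"
  obtain R \<Omega> where p: "p = (R, \<Omega>)" by (cases p)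
  show "p \<in> {p \<in> Udom. V p = 0} \<longleftrightarrow> p \<in> {(R, \<Omega>). R \<in> SO3 \<and> energy II \<Omega> = E0 \<and> momentum II R \<Omega> = \<pi>0}"
    unfolding p using V_eq_0_iff[of R \<Omega>] by (auto simp: Udom_def SO3_iff)
qed

lemma zeros_are_critical: "V p = 0 \<Longrightarrow> GDERIV V p :> 0"
proof (cases p)
  case (Pair R \<Omega>)
  assume "V p = 0"
  then have "dV R \<Omega> = (\<lambda>h. inner h 0)"
    unfolding Pair V_eq_0_iff by (simp add: dV_def fun_eq_iff)
  then show ?thesis unfolding Pair gderiv_def using has_derivative_V by metis
qed

theorem lyapunov_sublevel_set:
  assumes E0: "E0 > 0" and \<pi>0: "\<pi>0 \<noteq> 0"
  obtains c where "0 < c" "c < min (k0/4) (min (k1 * \<bar>E0\<bar> / 2) (k2 * (norm \<pi>0)^2 / 2))"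
    "compact {p \<in> Udom. V p \<in> {0..c}}"
    "{p \<in> {p \<in> Udom. V p \<in> {0..c}}. GDERIV V p :> 0} = {p \<in> Udom. V p = 0}"
proof -
  obtain \<epsilon> where \<epsilon>: "0 < \<epsilon>" "\<epsilon> \<le> 1/2" "\<epsilon> \<le> E0/2"
    and crit: "\<And>R \<Omega>. GDERIV V (R, \<Omega>) :> 0 \<Longrightarrow> det R \<noteq> 0 \<Longrightarrow> norm (orth_defect R) \<le> \<epsilon>
      \<Longrightarrow> \<bar>energy II \<Omega> - E0\<bar> \<le> \<epsilon> \<Longrightarrow> V (R, \<Omega>) = 0"
    using small_critical_points_are_zeros[OF E0] by blast
  define c where "c = min (k0 * \<epsilon>^2 / 4) (min (k1 * \<epsilon>^2 / 2) (k2 * (norm \<pi>0)^2 / 4))"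
  have \<epsilon>\<^sub>2: "\<epsilon>^2 \<le> \<epsilon> / 2" using \<epsilon> by (simp add: power2_eq_square mult_left_mono[of _ "1/2" \<epsilon>, simplified])
  have c_le: "c \<le> k0 * \<epsilon>^2 / 4" "c \<le> k1 * \<epsilon>^2 / 2" "c \<le> k2 * (norm \<pi>0)^2 / 4"
    unfolding c_def by auto
  have "\<epsilon>^2 < 1" "\<epsilon>^2 < E0" using \<epsilon> \<epsilon>\<^sub>2 by linarith+
  then have "k0 * \<epsilon>^2 < k0" "k1 * \<epsilon>^2 < k1 * \<bar>E0\<bar>"
    using k0 k1 E0 by simp_all
  moreover have "0 < k2 * (norm \<pi>0)^2" using \<pi>0 k2 by simp
  moreover have "0 < c" unfolding c_def using \<epsilon>(1) k0 k1 k2 \<pi>0 by simp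
  ultimately have c: "0 < c" "c < min (k0/4) (min (k1 * \<bar>E0\<bar> / 2) (k2 * (norm \<pi>0)^2 / 2))"
    using c_le by simp_all
  have "V (R, \<Omega>) = 0" if "GDERIV V (R, \<Omega>) :> 0" "(R, \<Omega>) \<in> Udom" "V (R, \<Omega>) \<le> c" for R \<Omega>
  proof (rule crit[OF that(1)])
    show "det R \<noteq> 0" using that(2) by (simp add: Udom_def)
    have "k0/4 * (norm (orth_defect R))^2 \<le> k0/4 * \<epsilon>^2" "k1/2 * (energy II \<Omega> - E0)^2 \<le> k1/2 * \<epsilon>^2"
      using V_le_imp_terms_le[OF that(3)] unfolding c_def by auto
    then show "norm (orth_defect R) \<le> \<epsilon>" "\<bar>energy II \<Omega> - E0\<bar> \<le> \<epsilon>"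
      using k0 k1 \<epsilon>(1) by (simp_all add: power2_le_iff_abs_le)
  qed
  then have "{p \<in> {p \<in> Udom. V p \<in> {0..c}}. GDERIV V p :> 0} = {p \<in> Udom. V p = 0}"
    using c(1) zeros_are_critical by auto
  moreover have "compact {p \<in> Udom. V p \<in> {0..c}}" using c(2) by (intro compact_sublevel) simp
  ultimately show ?thesis using that c by blast
qed

end

theorem lemma4:
  fixes II R0 :: "real^3^3" and \<Omega>0 :: "real^3" and k0 k1 k2 :: real
  assumes II_sym: "transpose II = II"
    and II_pd: "\<And>x::real^3. x \<noteq> 0 \<Longrightarrow> x \<bullet> (II *v x) > 0"
    and R0: "R0 \<in> SO3"
    and \<Omega>0: "\<Omega>0 \<noteq> 0"
    and k: "k0 > 0" "k1 > 0" "k2 > 0"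
  shows "\<exists>c. 0 < c \<and>
     c < min (k0/4) (min (k1 * \<bar>energy II \<Omega>0\<bar> / 2) (k2 * (norm (momentum II R0 \<Omega>0))^2 / 2)) \<and>
     (let V = Vfun II k0 k1 k2 (energy II \<Omega>0) (momentum II R0 \<Omega>0);
          S = {p \<in> Udom. V p \<in> {0..c}} in
        compact S \<and> S \<subseteq> Udom \<and>
        {p \<in> S. GDERIV V p :> 0} = {p \<in> Udom. V p = 0} \<and>
        {p \<in> Udom. V p = 0} = {(R, \<Omega>). R \<in> SO3 \<and> energy II \<Omega> = energy II \<Omega>0
                                   \<and> momentum II R \<Omega> = momentum II R0 \<Omega>0})"
proof -
  interpret rigid_body_lyapunov II k0 k1 k2 "energy II \<Omega>0" "momentum II R0 \<Omega>0"
    using II_sym II_pd k by unfold_locales auto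
  have "II *v \<Omega>0 \<noteq> 0" using II_pd[OF \<Omega>0] by auto
  then have "momentum II R0 \<Omega>0 \<noteq> 0"
    using R0 det_eq_0_iff_kernel[of R0] by (auto simp: SO3_def momentum_def)
  moreover have "energy II \<Omega>0 > 0" using II_pd[OF \<Omega>0] by (simp add: energy_def)
  ultimately obtain c where "0 < c"
    "c < min (k0/4) (min (k1 * \<bar>energy II \<Omega>0\<bar> / 2) (k2 * (norm (momentum II R0 \<Omega>0))^2 / 2))"
    "compact {p \<in> Udom. V p \<in> {0..c}}"
    "{p \<in> {p \<in> Udom. V p \<in> {0..c}}. GDERIV V p :> 0} = {p \<in> Udom. V p = 0}"
    using lyapunov_sublevel_set by blast
  then show ?thesis unfolding Let_def using zero_set_eq by blast
qed

end
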